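(* Let $(Q,\mathcal S)$ be a hypergraph with $Q=\{q_1,\dots,q_m\}$ and $\mathcal S=\{S_1,\dots,S_n\}$, where $n\ge 2$, every $S_j$ is a nonempty subset of $Q$, and $S_n=Q$. Let $G'$ be the graph constructed from $(Q,\mathcal S)$ as follows. Its vertex set consists of the vertices $q_1,\dots,q_m$; vertices $S_1,\dots,S_n$; vertices $S_1',\dots,S_n'$; a vertex $q^i_j$ for every pair $(i,j)$ with $q_i\in S_j$ (let $Q'$ be the set of these); and vertices $u_1,v,w,x$. Its edges are: $q^i_jq_i$ and $q^i_jS_j$ for every $q^i_j\in Q'$; $q_iS_j'$ whenever $q_i\in S_j$; $S_jS_k'$ for all $j,k\in\{1,\dots,n\}$; $u_1S_j$ for every $j$; $u_1v$; $wS_j'$ for every $j$; and $xv$, $xw$. Then $G'$ is bipartite. *)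

theory Defs
  imports Main
begin

text \<open>Vertices of the graph G': Qv i = q_i, Sv j = S_j, Sp j = S_j', Qij i j = q^i_j,
  and the four extra vertices u_1, v, w, x.  Indices are 1-based naturals.\<close>
datatype vtx = Qv nat | Sv nat | Sp nat | Qij nat nat | U1 | Vv | Wv | Xv

text \<open>Hypergraph: Q = {1..m} (q_i identified with i), S_j = S j for j in {1..n}.\<close>

definition Gp_verts :: "nat \<Rightarrow> nat \<Rightarrow> (nat \<Rightarrow> nat set) \<Rightarrow> vtx set" where
  "Gp_verts m n S =
     Qv ` {1..m} \<union> Sv ` {1..n} \<union> Sp ` {1..n}
     \<union> {Qij i j | i j. j \<in> {1..n} \<and> i \<in> S j} \<union> {U1, Vv, Wv, Xv}"

definition Gp_edge0 :: "nat \<Rightarrow> nat \<Rightarrow> (nat \<Rightarrow> nat set) \<Rightarrow> vtx \<Rightarrow> vtx \<Rightarrow> bool" where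
  "Gp_edge0 m n S a b \<longleftrightarrow>
     (\<exists>i j. j \<in> {1..n} \<and> i \<in> S j \<and>
        ((a = Qij i j \<and> b = Qv i) \<or> (a = Qij i j \<and> b = Sv j) \<or> (a = Qv i \<and> b = Sp j)))
   \<or> (\<exists>j k. j \<in> {1..n} \<and> k \<in> {1..n} \<and> a = Sv j \<and> b = Sp k)
   \<or> (\<exists>j \<in> {1..n}. (a = U1 \<and> b = Sv j) \<or> (a = Wv \<and> b = Sp j))
   \<or> (a = U1 \<and> b = Vv) \<or> (a = Xv \<and> b = Vv) \<or> (a = Xv \<and> b = Wv)"

definition Gp_edge :: "nat \<Rightarrow> nat \<Rightarrow> (nat \<Rightarrow> nat set) \<Rightarrow> vtx \<Rightarrow> vtx \<Rightarrow> bool" where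
  "Gp_edge m n S a b \<longleftrightarrow> Gp_edge0 m n S a b \<or> Gp_edge0 m n S b a"

definition bipartite :: "'a set \<Rightarrow> ('a \<Rightarrow> 'a \<Rightarrow> bool) \<Rightarrow> bool" where
  "bipartite V E \<longleftrightarrow> (\<exists>A B. A \<inter> B = {} \<and> A \<union> B = V \<and>
     (\<forall>u v. E u v \<longrightarrow> (u \<in> A \<and> v \<in> B) \<or> (u \<in> B \<and> v \<in> A)))"

end

theory Submission
  imports Defs
begin

text \<open>The parts are \<open>{q_i, S_j, v, w}\<close> and \<open>{S_j', q^i_j, u_1, x}\<close>; every edge of \<open>G'\<close>
  joins them, which is all there is to check.\<close>

lemma bipartiteI_colouring:
  fixes c :: "'a \<Rightarrow> bool"
  assumes "\<And>u v. E u v \<Longrightarrow> u \<in> V \<and> v \<in> V \<and> c u \<noteq> c v"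
  shows "bipartite V E"
  unfolding bipartite_def
proof (intro exI conjI)
  show "{a \<in> V. c a} \<inter> {a \<in> V. \<not> c a} = {}" and "{a \<in> V. c a} \<union> {a \<in> V. \<not> c a} = V"
    by auto
  show "\<forall>u v. E u v \<longrightarrow> u \<in> {a \<in> V. c a} \<and> v \<in> {a \<in> V. \<not> c a}
                     \<or> u \<in> {a \<in> V. \<not> c a} \<and> v \<in> {a \<in> V. c a}"
    using assms by blast
qed

fun Gp_colour :: "vtx \<Rightarrow> bool" where
  "Gp_colour (Qv _) = True" | "Gp_colour (Sv _) = True" | "Gp_colour Vv = True"
| "Gp_colour Wv = True" | "Gp_colour (Sp _) = False" | "Gp_colour (Qij _ _) = False"
| "Gp_colour U1 = False" | "Gp_colour Xv = False"

lemma Gp_edge0_properly_coloured: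
  assumes "\<And>j. j \<in> {1..n} \<Longrightarrow> S j \<subseteq> {1..m}"
    and "Gp_edge0 m n S a b"
  shows "a \<in> Gp_verts m n S \<and> b \<in> Gp_verts m n S \<and> Gp_colour a \<noteq> Gp_colour b"
  using assms unfolding Gp_edge0_def Gp_verts_def by fastforce

theorem lemma5:
  fixes m n :: nat and S :: "nat \<Rightarrow> nat set"
  assumes "n \<ge> 2"
    and "\<And>j. j \<in> {1..n} \<Longrightarrow> S j \<noteq> {} \<and> S j \<subseteq> {1..m}"
    and "inj_on S {1..n}"
    and "S n = {1..m}"
  shows "bipartite (Gp_verts m n S) (Gp_edge m n S)"
proof (rule bipartiteI_colouring)
  have "\<And>j. j \<in> {1..n} \<Longrightarrow> S j \<subseteq> {1..m}"
    using assms(2) by blast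
  then show "\<And>a b. Gp_edge m n S a b \<Longrightarrow>
      a \<in> Gp_verts m n S \<and> b \<in> Gp_verts m n S \<and> Gp_colour a \<noteq> Gp_colour b"
    unfolding Gp_edge_def using Gp_edge0_properly_coloured by metis
qed

end
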